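(* Let $\mathbb S^1=\{z\in\mathbb C:|z|=1\}$, let $f:\mathbb S^1\to\mathbb S^1$ be $f(z)=z^2$, let $\rho(z)=e^{i\alpha}z$ with $\alpha/2\pi$ irrational, and let $g=\rho\circ f$. If $d$ is any metric on $\mathbb S^1$ inducing the standard topology of $\mathbb S^1$, then $\mathrm{Lip}(f,d)>1$ and $\mathrm{Lip}(g,d)>1$.
   Context: For a self-map $f$ of a metric space $(\mathbb X,d)$, $\mathrm{Lip}(f,d)=\sup_{x\neq y} d(f(x),f(y))/d(x,y)$. *)

theory Defs
  imports "HOL-Analysis.Analysis"
begin

definition Lip :: "'a set \<Rightarrow> ('a \<Rightarrow> 'a) \<Rightarrow> ('a \<Rightarrow> 'a \<Rightarrow> real) \<Rightarrow> ereal" where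
  "Lip S f d = (SUP p \<in> {(x,y). x \<in> S \<and> y \<in> S \<and> x \<noteq> y}.
                   ereal (d (f (fst p)) (f (snd p)) / d (fst p) (snd p)))"

end

theory Submission
  imports Defs
begin

text \<open>A non-expansive map of a totally bounded metric space onto itself is injective: if
  \<open>h a = h b\<close> with \<open>a \<noteq> b\<close>, choose backward orbits \<open>x\<^sub>n\<close>, \<open>y\<^sub>n\<close> of \<open>a\<close> and \<open>b\<close>. Since
  \<open>h\<^sup>n\<close> maps them back to \<open>a\<close>, \<open>b\<close> and does not increase distances, \<open>d x\<^sub>n y\<^sub>n \<ge> d a b\<close>.
  Total boundedness yields \<open>k\<close> and \<open>m > 0\<close> with \<open>x\<^sub>k\<close> close to \<open>x\<^sub>k\<^sub>+\<^sub>m\<close> and \<open>y\<^sub>k\<close> close to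
  \<open>y\<^sub>k\<^sub>+\<^sub>m\<close>; applying \<open>h\<^sup>k\<^sup>+\<^sup>1\<close> puts both \<open>x\<^sub>m\<^sub>-\<^sub>1\<close> and \<open>y\<^sub>m\<^sub>-\<^sub>1\<close> close to \<open>h a = h b\<close>, a contradiction.
  The circle is compact for any metric inducing its topology, and both \<open>z \<mapsto> z\<^sup>2\<close> and
  \<open>z \<mapsto> e\<^sup>i\<^sup>\<alpha> z\<^sup>2\<close> map it two-to-one onto itself, so neither has Lipschitz constant \<open>\<le> 1\<close>.\<close>

context Metric_space
begin

lemma mdist_funpow_le:
  assumes into: "\<And>x. x \<in> M \<Longrightarrow> h x \<in> M"
    and nonexp: "\<And>x y. x \<in> M \<Longrightarrow> y \<in> M \<Longrightarrow> d (h x) (h y) \<le> d x y"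
    and "x \<in> M" "y \<in> M"
  shows "d ((h ^^ n) x) ((h ^^ n) y) \<le> d x y"
  using assms(3,4)
proof (induction n arbitrary: x y)
  case (Suc n)
  have "d ((h ^^ n) (h x)) ((h ^^ n) (h y)) \<le> d (h x) (h y)"
    using Suc into by blast
  also have "\<dots> \<le> d x y"
    using Suc nonexp by blast
  finally show ?case
    by (simp only: funpow_Suc_right o_apply)
qed simp

lemma mtotally_bounded_recurrent_pair:
  fixes x y :: "nat \<Rightarrow> 'a"
  assumes tb: "mtotally_bounded M" and x: "range x \<subseteq> M" and y: "range y \<subseteq> M"
    and "\<epsilon> > 0"
  obtains k m where "m > 0" "d (x k) (x (k + m)) < \<epsilon>" "d (y k) (y (k + m)) < \<epsilon>"
proof -
  obtain r where r: "strict_mono r" "MCauchy (x \<circ> r)"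
    using tb x unfolding mtotally_bounded_sequentially by blast
  have "range (y \<circ> r) \<subseteq> M"
    using y by auto
  then obtain s where s: "strict_mono s" "MCauchy (y \<circ> r \<circ> s)"
    using tb unfolding mtotally_bounded_sequentially by blast
  have "MCauchy (x \<circ> r \<circ> s)"
    using MCauchy_subsequence r(2) s(1) by blast
  then obtain N1 where N1: "\<And>n n'. N1 \<le> n \<Longrightarrow> N1 \<le> n' \<Longrightarrow> d (x (r (s n))) (x (r (s n'))) < \<epsilon>"
    using \<open>\<epsilon> > 0\<close> unfolding MCauchy_def by fastforce
  obtain N2 where N2: "\<And>n n'. N2 \<le> n \<Longrightarrow> N2 \<le> n' \<Longrightarrow> d (y (r (s n))) (y (r (s n'))) < \<epsilon>"
    using s(2) \<open>\<epsilon> > 0\<close> unfolding MCauchy_def by fastforce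
  define N where "N = max N1 N2"
  have less: "r (s N) < r (s (Suc N))"
    using r(1) s(1) by (simp add: strict_mono_def)
  show ?thesis
  proof (rule that[of "r (s (Suc N)) - r (s N)" "r (s N)"])
    show "d (x (r (s N))) (x (r (s N) + (r (s (Suc N)) - r (s N)))) < \<epsilon>"
      using N1[of N "Suc N"] less by (simp add: N_def)
    show "d (y (r (s N))) (y (r (s N) + (r (s (Suc N)) - r (s N)))) < \<epsilon>"
      using N2[of N "Suc N"] less by (simp add: N_def)
  qed (use less in simp)
qed

lemma nonexpansive_surj_imp_inj_on:
  assumes tb: "mtotally_bounded M" and onto: "h ` M = M"
    and nonexp: "\<And>x y. x \<in> M \<Longrightarrow> y \<in> M \<Longrightarrow> d (h x) (h y) \<le> d x y"
  shows "inj_on h M"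
proof (rule inj_onI, rule ccontr)
  fix a b assume a: "a \<in> M" and b: "b \<in> M" and hab: "h a = h b" and "a \<noteq> b"
  have into: "h x \<in> M" if "x \<in> M" for x
    using onto that by blast
  define pre where "pre = inv_into M h"
  have pre: "pre y \<in> M" "h (pre y) = y" if "y \<in> M" for y
    using that onto by (simp_all add: pre_def inv_into_into f_inv_into_f)
  have preM: "(pre ^^ n) z \<in> M" if "z \<in> M" for n z
    using that pre by (induction n) auto
  have funpow_pre: "(h ^^ k) ((pre ^^ (j + k)) z) = (pre ^^ j) z" if "z \<in> M" for j k z
  proof (induction k)
    case (Suc k)
    have "(h ^^ Suc k) ((pre ^^ (j + Suc k)) z) = (h ^^ k) (h (pre ((pre ^^ (j + k)) z)))"
      by (simp only: add_Suc_right funpow_Suc_right[of k h] funpow.simps(2)[of _ pre] o_apply)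
    also have "\<dots> = (pre ^^ j) z"
      using Suc pre(2)[OF preM[OF that]] by simp
    finally show ?case .
  qed simp
  define x where "x n = (pre ^^ n) a" for n
  define y where "y n = (pre ^^ n) b" for n
  have xM: "range x \<subseteq> M" and yM: "range y \<subseteq> M"
    using preM a b by (auto simp: x_def y_def)
  then have x_mem: "x i \<in> M" and y_mem: "y i \<in> M" for i
    by auto
  have x_back: "(h ^^ k) (x (j + k)) = x j" for j k
    using funpow_pre a by (simp add: x_def)
  have y_back: "(h ^^ k) (y (j + k)) = y j" for j k
    using funpow_pre b by (simp add: y_def)
  have x0: "x 0 = a" and y0: "y 0 = b"
    by (simp_all add: x_def y_def)
  have iter: "d ((h ^^ n) u) ((h ^^ n) v) \<le> d u v" if "u \<in> M" "v \<in> M" for u v n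
    using mdist_funpow_le[OF into nonexp that] .
  have far: "d a b \<le> d (x n) (y n)" for n
  proof -
    have "(h ^^ n) (x n) = a" "(h ^^ n) (y n) = b"
      using x_back[of n 0] y_back[of n 0] by (simp_all add: x0 y0)
    then show ?thesis
      using iter[OF x_mem y_mem, of n n n] by (simp only:)
  qed
  have "d a b / 2 > 0"
    using \<open>a \<noteq> b\<close> a b by simp
  then obtain k m where "m > 0" and
    cx: "d (x k) (x (k + m)) < d a b / 2" and cy: "d (y k) (y (k + m)) < d a b / 2"
    by (rule mtotally_bounded_recurrent_pair[OF tb xM yM])
  then obtain m' where m: "m = Suc m'"
    using not0_implies_Suc by blast
  have "d a (x m) < d a b / 2" "d b (y m) < d a b / 2"
    using iter[OF x_mem x_mem, of k k "k + m"] iter[OF y_mem y_mem, of k k "k + m"] cx cy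
      x_back[of k 0] x_back[of k m] y_back[of k 0] y_back[of k m]
    by (simp_all add: x0 y0 add.commute)
  moreover have "h (x m) = x m'" "h (y m) = y m'"
    using x_back[of 1 m'] y_back[of 1 m'] by (simp_all add: m)
  ultimately have "d (h a) (x m') < d a b / 2" "d (h a) (y m') < d a b / 2"
    using nonexp[OF a, of "x m"] nonexp[OF b, of "y m"] x_mem y_mem hab by fastforce+
  then have "d (x m') (y m') < d a b"
    using triangle[OF x_mem into[OF a] y_mem, of m' m'] commute[of "x m'" "h a"] by linarith
  with far[of m'] show False
    by linarith
qed

end

lemma nonexpansive_if_Lip_le_1:
  assumes met: "Metric_space M d" and Lip: "Lip M h d \<le> 1"
    and into: "h ` M \<subseteq> M" and x: "x \<in> M" and y: "y \<in> M"
  shows "d (h x) (h y) \<le> d x y"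
proof (cases "x = y")
  case True
  then show ?thesis
    using Metric_space.mdist_zero[OF met] into x by auto
next
  case False
  then have "(x, y) \<in> {(x, y). x \<in> M \<and> y \<in> M \<and> x \<noteq> y}"
    using x y by simp
  then have "ereal (d (h x) (h y) / d x y) \<le> Lip M h d"
    unfolding Lip_def by (rule SUP_upper2) simp
  also note Lip
  finally have "d (h x) (h y) / d x y \<le> 1"
    by (simp add: one_ereal_def)
  moreover have "d x y > 0"
    using False x y Metric_space.mdist_pos_less[OF met] by blast
  ultimately show ?thesis
    by (simp add: divide_le_eq)
qed

lemma Lip_gt_1_if_not_inj_on:
  assumes met: "Metric_space M d" and tb: "Metric_space.mtotally_bounded M d M"
    and onto: "h ` M = M" and "\<not> inj_on h M"
  shows "Lip M h d > 1"
proof (rule ccontr)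
  assume "\<not> Lip M h d > 1"
  then have Lip: "Lip M h d \<le> 1"
    by simp
  have "d (h x) (h y) \<le> d x y" if "x \<in> M" "y \<in> M" for x y
    by (rule nonexpansive_if_Lip_le_1[OF met Lip _ that]) (simp add: onto)
  then have "inj_on h M"
    by (rule Metric_space.nonexpansive_surj_imp_inj_on[OF met tb onto])
  with \<open>\<not> inj_on h M\<close> show False
    by contradiction
qed

lemma image_sphere_rotated_square:
  fixes c :: complex
  assumes "norm c = 1"
  shows "(\<lambda>z. c * z ^ 2) ` sphere 0 1 = sphere 0 1"
proof
  show "(\<lambda>z. c * z ^ 2) ` sphere 0 1 \<subseteq> sphere 0 1"
    using assms by (auto simp: norm_mult norm_power)
  show "sphere 0 1 \<subseteq> (\<lambda>z. c * z ^ 2) ` sphere 0 1"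
  proof
    fix y :: complex assume y: "y \<in> sphere 0 1"
    have "c * csqrt (y / c) ^ 2 = y" and "csqrt (y / c) \<in> sphere 0 1"
      using assms y by (auto simp: norm_divide)
    then show "y \<in> (\<lambda>z. c * z ^ 2) ` sphere 0 1"
      by (metis image_eqI)
  qed
qed

lemma not_inj_on_sphere_rotated_square:
  fixes c :: complex
  shows "\<not> inj_on (\<lambda>z. c * z ^ 2) (sphere 0 1)"
proof
  assume "inj_on (\<lambda>z. c * z ^ 2) (sphere 0 1)"
  then have "(1::complex) = -1"
    by (rule inj_onD) auto
  then show False
    by simp
qed

theorem mainTheorem1:
  fixes \<alpha> :: real and d :: "complex \<Rightarrow> complex \<Rightarrow> real"
  assumes irr: "\<alpha> / (2 * pi) \<notin> \<rat>"
    and met: "Metric_space (sphere 0 1) d"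
    and top: "Metric_space.mtopology (sphere 0 1) d = top_of_set (sphere (0::complex) 1)"
  shows "Lip (sphere 0 1) (\<lambda>z. z ^ 2) d > 1
       \<and> Lip (sphere 0 1) (\<lambda>z. exp (\<i> * complex_of_real \<alpha>) * z ^ 2) d > 1"
proof -
  interpret Metric_space "sphere 0 1" d
    by (rule met)
  have "compact_space mtopology"
    unfolding top by (rule compact_space_subtopology) simp
  then have tb: "mtotally_bounded (sphere 0 1)"
    using compact_space_eq_mcomplete_mtotally_bounded by blast
  have Lip: "Lip (sphere 0 1) (\<lambda>z. c * z ^ 2) d > 1" if "norm c = 1" for c
    by (rule Lip_gt_1_if_not_inj_on[OF met tb image_sphere_rotated_square[OF that]
          not_inj_on_sphere_rotated_square])
  show ?thesis
    using Lip[of 1] Lip[of "exp (\<i> * complex_of_real \<alpha>)"] by (simp add: norm_exp)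
qed

end
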